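(* Let $n$ be the number of nodes of $G$, let $k$ be a positive integer and $2\le \ell\le k$. Let $C_\ell$ be a maximal connected subgraph of $G_k$ all of whose nodes have level $\ell$, and let $H_\ell$ consist of $C_\ell$ together with all its descendants in $G_k$. If $H_\ell$ is light, i.e. $|H_\ell|\le n^{\ell/k}$, then at most $n^{1/k}$ nodes $v\in C_\ell$ have a heavy right child, i.e. a right child $\mathrm{RC}(v)$ whose component $H_{\ell-1}$ (the maximal connected level-$(\ell-1)$ subgraph $C_{\ell-1}$ of $G_k$ containing $\mathrm{RC}(v)$ together with all its descendants in $G_k$) satisfies $|H_{\ell-1}|> n^{(\ell-1)/k}$.
   Context: Colored tree labelings. A colored tree labeling of a graph $G$ of bounded degree assigns to each node $v$ a parent $\mathrm{P}(v)$, a left child $\mathrm{LC}(v)$ and a right child $\mathrm{RC}(v)$, each a port number of $v$ or $\bot$ (a non-$\bot$ value is identified with the neighbor reached through that port; the non-$\bot$ values at $v$ are pairwise distinct), and a color $\chi_{\mathrm{in}}(v)\in\{R,B\}$. Hierarchical forest. Define $\mathrm{level}(v)=1$ if $\mathrm{RC}(v)=\bot$ and $\mathrm{level}(v)=1+\mathrm{level}(\mathrm{RC}(v))$ otherwise. For $k\ge1$, the hierarchical forest $G_k$ contains the edge $\{u,v\}$ iff $\mathrm{level}(u),\mathrm{level}(v)\le k$, $v=\mathrm{P}(u)$, and either ($u=\mathrm{LC}(v)$ and $\mathrm{level}(v)=\mathrm{level}(u)$) or ($u=\mathrm{RC}(v)$ and $\mathrm{level}(v)=\mathrm{level}(u)+1$);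 it is viewed as directed from $v$ (parent) to $u$ (child), and descendants are taken along these directed edges. Labels whose corresponding edge is not in $G_k$ are treated as $\bot$. Each maximal connected subgraph of $G_k$ whose nodes all have the same level is a directed path or cycle along $\mathrm{LC}$-edges. *)

theory Defs
  imports Complex_Main "HOL-Library.Extended_Nat"
begin

datatype color = R | B

text \<open>A finite simple graph on the node set V with symmetric irreflexive adjacency E.
  Port numbers are identified with the neighbours they lead to, so a label is
  an optional neighbour.\<close>

definition simple_graph :: "'a set \<Rightarrow> ('a \<Rightarrow> 'a \<Rightarrow> bool) \<Rightarrow> bool" where
  "simple_graph V E \<longleftrightarrow> finite V \<and> (\<forall>u v. E u v \<longrightarrow> E v u) \<and> (\<forall>u. \<not> E u u)
     \<and> (\<forall>u v. E u v \<longrightarrow> u \<in> V \<and> v \<in> V)"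

definition colored_tree_labeling ::
  "'a set \<Rightarrow> ('a \<Rightarrow> 'a \<Rightarrow> bool) \<Rightarrow> ('a \<Rightarrow> 'a option) \<Rightarrow> ('a \<Rightarrow> 'a option) \<Rightarrow> ('a \<Rightarrow> 'a option)
     \<Rightarrow> ('a \<Rightarrow> color) \<Rightarrow> bool" where
  "colored_tree_labeling V E P LC RC chi \<longleftrightarrow>
     (\<forall>v\<in>V. (\<forall>u. P v = Some u \<longrightarrow> E v u) \<and> (\<forall>u. LC v = Some u \<longrightarrow> E v u)
            \<and> (\<forall>u. RC v = Some u \<longrightarrow> E v u)
            \<and> (P v = LC v \<longrightarrow> P v = None) \<and> (P v = RC v \<longrightarrow> P v = None)
            \<and> (LC v = RC v \<longrightarrow> LC v = None))"

fun rc_iter :: "('a \<Rightarrow> 'a option) \<Rightarrow> nat \<Rightarrow> 'a \<Rightarrow> 'a option" where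
  "rc_iter RC 0 v = Some v"
| "rc_iter RC (Suc i) v = Option.bind (rc_iter RC i v) RC"

text \<open>level v = 1 if RC v = bot, else 1 + level (RC v); infinite if the RC-chain never ends.\<close>
definition level :: "('a \<Rightarrow> 'a option) \<Rightarrow> 'a \<Rightarrow> enat" where
  "level RC v = (if \<exists>m. rc_iter RC m v = None
                 then enat (LEAST m. rc_iter RC m v = None) else \<infinity>)"

definition gk_edge :: "('a \<Rightarrow> 'a option) \<Rightarrow> ('a \<Rightarrow> 'a option) \<Rightarrow> ('a \<Rightarrow> 'a option)
    \<Rightarrow> nat \<Rightarrow> 'a \<Rightarrow> 'a \<Rightarrow> bool" where
  "gk_edge P LC RC k v u \<longleftrightarrow>
     level RC u \<le> enat k \<and> level RC v \<le> enat k \<and> P u = Some v \<and>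
     ((LC v = Some u \<and> level RC v = level RC u) \<or>
      (RC v = Some u \<and> level RC v = level RC u + 1))"

definition same_level_comp :: "('a \<Rightarrow> 'a option) \<Rightarrow> ('a \<Rightarrow> 'a option) \<Rightarrow> ('a \<Rightarrow> 'a option)
    \<Rightarrow> nat \<Rightarrow> 'a \<Rightarrow> 'a set" where
  "same_level_comp P LC RC k c =
     {w. (c, w) \<in> {(x, y). (gk_edge P LC RC k x y \<or> gk_edge P LC RC k y x)
                          \<and> level RC x = level RC y}\<^sup>*}"

definition with_descendants :: "('a \<Rightarrow> 'a option) \<Rightarrow> ('a \<Rightarrow> 'a option) \<Rightarrow> ('a \<Rightarrow> 'a option)
    \<Rightarrow> nat \<Rightarrow> 'a set \<Rightarrow> 'a set" where
  "with_descendants P LC RC k S =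
     {w. \<exists>s\<in>S. (s, w) \<in> {(x, y). gk_edge P LC RC k x y}\<^sup>*}"

end

theory Submission
  imports Defs "HOL-Library.Disjoint_Sets"
begin

text \<open>Every node has at most one parent, so the descendant sets of two nodes of \<open>G_k\<close> are
  nested or disjoint. The right children of distinct nodes of \<open>C_l\<close> share a level, one below
  their parents, so none of them descends from another: the path would enter it through its
  parent, which sits one level higher. Hence their components, which consist of their
  descendants, are pairwise disjoint subsets of \<open>H_l\<close>, and at most
  \<open>|H_l| / n^((l-1)/k) \<le> n^(1/k)\<close> of them can have more than \<open>n^((l-1)/k)\<close> nodes.\<close>

lemma card_le_of_disjoint_heavy_subsets:
  fixes a b :: real
  assumes "finite X" "finite I" "\<And>i. i \<in> I \<Longrightarrow> A i \<subseteq> X" "disjoint_family_on A I"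
    and "\<And>i. i \<in> I \<Longrightarrow> a < card (A i)" "card X \<le> a * b" "a > 0"
  shows "card I \<le> b"
proof -
  have fin: "finite (A i)" if "i \<in> I" for i
    using assms(3)[OF that] assms(1) by (rule finite_subset)
  have "card I * a = (\<Sum>i\<in>I. a)"
    by simp
  also have "\<dots> \<le> (\<Sum>i\<in>I. real (card (A i)))"
    by (rule sum_mono) (use assms(5) in \<open>simp add: less_imp_le\<close>)
  also have "\<dots> = card (\<Union>(A ` I))"
    using assms(2,4) fin by (simp add: card_UN_disjoint disjoint_family_on_def)
  also have "\<dots> \<le> card X"
    using assms(1,3) by (simp add: card_mono UN_least)
  also have "\<dots> \<le> b * a"
    using assms(6) by (simp add: mult.commute)
  finally show ?thesis
    using assms(7) by simp
qed

abbreviation gk_rel :: "('a \<Rightarrow> 'a option) \<Rightarrow> ('a \<Rightarrow> 'a option) \<Rightarrow> ('a \<Rightarrow> 'a option)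
    \<Rightarrow> nat \<Rightarrow> ('a \<times> 'a) set" where
  "gk_rel P LC RC k \<equiv> {(x, y). gk_edge P LC RC k x y}"

lemma gk_edge_parent: "gk_edge P LC RC k x y \<Longrightarrow> P y = Some x"
  by (simp add: gk_edge_def)

lemma level_gk_edge_le: "gk_edge P LC RC k x y \<Longrightarrow> level RC y \<le> level RC x"
  unfolding gk_edge_def by (cases "level RC y") (auto simp: one_enat_def)

lemma level_le_of_rtrancl_gk_rel:
  "(x, y) \<in> (gk_rel P LC RC k)\<^sup>* \<Longrightarrow> level RC y \<le> level RC x"
  by (induction rule: rtrancl_induct) (auto dest: level_gk_edge_le intro: order_trans)

lemma rtrancl_gk_rel_comparable:
  assumes "(a, w) \<in> (gk_rel P LC RC k)\<^sup>*" "(b, w) \<in> (gk_rel P LC RC k)\<^sup>*"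
  shows "(a, b) \<in> (gk_rel P LC RC k)\<^sup>* \<or> (b, a) \<in> (gk_rel P LC RC k)\<^sup>*"
  using assms
proof (induction arbitrary: b rule: rtrancl_induct)
  case base
  then show ?case by simp
next
  case (step y z)
  from step.prems show ?case
  proof (cases rule: rtranclE)
    case base
    then show ?thesis using step by (meson rtrancl.rtrancl_into_rtrancl)
  next
    case (step y')
    then have "y' = y" using step.hyps(2) by (auto dest!: gk_edge_parent)
    then show ?thesis using step.IH step by blast
  qed
qed

lemma rtrancl_gk_rel_to_child_eq:
  assumes "(u', u) \<in> (gk_rel P LC RC k)\<^sup>*" "gk_edge P LC RC k v u"
    and "level RC u' \<le> level RC u" "level RC u < level RC v"
  shows "u' = u"
proof (rule ccontr)
  assume "u' \<noteq> u"
  with assms(1) obtain z where "(u', z) \<in> (gk_rel P LC RC k)\<^sup>*" "gk_edge P LC RC k z u"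
    by (auto elim: rtranclE)
  moreover from this assms(2) have "z = v"
    by (auto dest!: gk_edge_parent)
  ultimately show False
    using level_le_of_rtrancl_gk_rel assms(3,4) by fastforce
qed

lemma descendants_disjoint:
  assumes "gk_edge P LC RC k v u" "gk_edge P LC RC k v' u'" "u \<noteq> u'"
    and "level RC u = level RC u'" "level RC u < level RC v" "level RC u' < level RC v'"
  shows "{w. (u, w) \<in> (gk_rel P LC RC k)\<^sup>*} \<inter> {w. (u', w) \<in> (gk_rel P LC RC k)\<^sup>*} = {}"
proof -
  have False if "(u, w) \<in> (gk_rel P LC RC k)\<^sup>*" "(u', w) \<in> (gk_rel P LC RC k)\<^sup>*" for w
    using rtrancl_gk_rel_comparable[OF that] rtrancl_gk_rel_to_child_eq assms by force
  then show ?thesis by blast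
qed

lemma level_same_level_comp:
  "w \<in> same_level_comp P LC RC k c \<Longrightarrow> level RC w = level RC c"
  unfolding same_level_comp_def mem_Collect_eq by (induction rule: rtrancl_induct) auto

text \<open>Leaving the component of \<open>u\<close> upwards would mean passing from \<open>u\<close> to its parent,
  which is excluded by the level hypothesis.\<close>

lemma same_level_comp_subset_descendants:
  assumes "P u = Some v" "level RC v \<noteq> level RC u"
  shows "same_level_comp P LC RC k u \<subseteq> {w. (u, w) \<in> (gk_rel P LC RC k)\<^sup>*}"
proof
  fix w assume "w \<in> same_level_comp P LC RC k u"
  then have "(u, w) \<in> {(x, y). (gk_edge P LC RC k x y \<or> gk_edge P LC RC k y x)
                          \<and> level RC x = level RC y}\<^sup>*"
    by (simp add: same_level_comp_def)
  then show "w \<in> {w. (u, w) \<in> (gk_rel P LC RC k)\<^sup>*}"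
  proof (induction rule: rtrancl_induct)
    case (step x y)
    show ?case
    proof (cases "gk_edge P LC RC k x y")
      case True
      then show ?thesis using step by (simp add: rtrancl.rtrancl_into_rtrancl)
    next
      case False
      then have up: "gk_edge P LC RC k y x" "level RC x = level RC y"
        using step by auto
      from step.IH have "(u, x) \<in> (gk_rel P LC RC k)\<^sup>*" by simp
      then show ?thesis
      proof (cases rule: rtranclE)
        case base
        then show ?thesis using up assms by (auto dest!: gk_edge_parent)
      next
        case (step z)
        then show ?thesis using up by (auto dest!: gk_edge_parent)
      qed
    qed
  qed simp
qed

lemma with_descendants_same_level_comp_subset:
  assumes "gk_edge P LC RC k v u" "level RC u < level RC v"
  shows "with_descendants P LC RC k (same_level_comp P LC RC k u)
           \<subseteq> {w. (u, w) \<in> (gk_rel P LC RC k)\<^sup>*}"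
proof -
  have "P u = Some v" "level RC v \<noteq> level RC u"
    using assms by (auto dest: gk_edge_parent)
  then have "same_level_comp P LC RC k u \<subseteq> {w. (u, w) \<in> (gk_rel P LC RC k)\<^sup>*}"
    by (rule same_level_comp_subset_descendants)
  then show ?thesis
    by (auto simp: with_descendants_def intro: rtrancl_trans)
qed

lemma gk_edge_mem_iff:
  assumes "simple_graph V E" "colored_tree_labeling V E P LC RC chi" "gk_edge P LC RC k x y"
  shows "x \<in> V \<longleftrightarrow> y \<in> V"
  using assms unfolding simple_graph_def colored_tree_labeling_def gk_edge_def by blast

lemma same_level_comp_subset_V:
  assumes "simple_graph V E" "colored_tree_labeling V E P LC RC chi" "c \<in> V"
  shows "same_level_comp P LC RC k c \<subseteq> V"
proof
  fix w assume "w \<in> same_level_comp P LC RC k c"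
  then have "(c, w) \<in> {(x, y). (gk_edge P LC RC k x y \<or> gk_edge P LC RC k y x)
                          \<and> level RC x = level RC y}\<^sup>*"
    by (simp add: same_level_comp_def)
  then show "w \<in> V"
    by induction (use assms(3) gk_edge_mem_iff[OF assms(1,2)] in auto)
qed

lemma with_descendants_subset_V:
  assumes "simple_graph V E" "colored_tree_labeling V E P LC RC chi" "S \<subseteq> V"
  shows "with_descendants P LC RC k S \<subseteq> V"
proof
  fix w assume "w \<in> with_descendants P LC RC k S"
  then obtain s where s: "s \<in> S" and "(s, w) \<in> (gk_rel P LC RC k)\<^sup>*"
    by (auto simp: with_descendants_def)
  from this(2) show "w \<in> V"
    by (induction rule: rtrancl_induct) (use s assms(3) gk_edge_mem_iff[OF assms(1,2)] in auto)
qed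

text \<open>The edge to a right child cannot be a left-child edge, since \<open>LC v \<noteq> RC v\<close>.\<close>

lemma level_right_child:
  assumes "colored_tree_labeling V E P LC RC chi" "v \<in> V"
    and "RC v = Some u" "gk_edge P LC RC k v u"
  shows "level RC v = level RC u + 1"
  using assms unfolding colored_tree_labeling_def gk_edge_def by auto

lemma level_right_child_less:
  assumes "colored_tree_labeling V E P LC RC chi" "v \<in> V"
    and "RC v = Some u" "gk_edge P LC RC k v u"
  shows "level RC u < level RC v"
proof -
  have "level RC u \<le> enat k"
    using assms(4) by (simp add: gk_edge_def)
  then show ?thesis
    using level_right_child[OF assms] by (cases "level RC u") (auto simp: one_enat_def)
qed

lemma right_child_descendants_subset:
  assumes "v \<in> S" "gk_edge P LC RC k v u" "level RC u < level RC v"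
  shows "with_descendants P LC RC k (same_level_comp P LC RC k u) \<subseteq> with_descendants P LC RC k S"
  using with_descendants_same_level_comp_subset[OF assms(2,3)] assms(1,2)
  by (auto simp: with_descendants_def intro: converse_rtrancl_into_rtrancl)

lemma right_children_descendants_disjoint:
  assumes "simple_graph V E" "colored_tree_labeling V E P LC RC chi" "c \<in> V"
  shows "disjoint_family_on (\<lambda>v. with_descendants P LC RC k (same_level_comp P LC RC k (the (RC v))))
           {v \<in> same_level_comp P LC RC k c. \<exists>u. RC v = Some u \<and> gk_edge P LC RC k v u}"
  unfolding disjoint_family_on_def
proof (intro ballI impI)
  fix v v'
  assume v: "v \<in> {v \<in> same_level_comp P LC RC k c. \<exists>u. RC v = Some u \<and> gk_edge P LC RC k v u}"
    and v': "v' \<in> {v \<in> same_level_comp P LC RC k c. \<exists>u. RC v = Some u \<and> gk_edge P LC RC k v u}"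
    and "v \<noteq> v'"
  then obtain u u' where u: "RC v = Some u" "gk_edge P LC RC k v u"
    and u': "RC v' = Some u'" "gk_edge P LC RC k v' u'"
    by blast
  have "v \<in> V" "v' \<in> V"
    using v v' same_level_comp_subset_V[OF assms] by blast+
  note levels = level_right_child[OF assms(2) \<open>v \<in> V\<close> u] level_right_child[OF assms(2) \<open>v' \<in> V\<close> u']
    level_right_child_less[OF assms(2) \<open>v \<in> V\<close> u] level_right_child_less[OF assms(2) \<open>v' \<in> V\<close> u']
  have "level RC v = level RC v'"
    using level_same_level_comp[of v P LC RC k c] level_same_level_comp[of v' P LC RC k c] v v'
    by simp
  with levels have "level RC u = level RC u'"
    by (cases "level RC u"; cases "level RC u'") (auto simp: one_enat_def)
  moreover have "u \<noteq> u'"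
    using u(2) u'(2) \<open>v \<noteq> v'\<close> by (auto dest!: gk_edge_parent)
  ultimately have "{w. (u, w) \<in> (gk_rel P LC RC k)\<^sup>*} \<inter> {w. (u', w) \<in> (gk_rel P LC RC k)\<^sup>*} = {}"
    by (intro descendants_disjoint[OF u(2) u'(2) _ _ levels(3,4)])
  then show "with_descendants P LC RC k (same_level_comp P LC RC k (the (RC v)))
      \<inter> with_descendants P LC RC k (same_level_comp P LC RC k (the (RC v'))) = {}"
    using with_descendants_same_level_comp_subset[OF u(2) levels(3)]
      with_descendants_same_level_comp_subset[OF u'(2) levels(4)] u(1) u'(1) by auto
qed

theorem mainTheorem7:
  fixes V :: "'a set" and E :: "'a \<Rightarrow> 'a \<Rightarrow> bool"
    and P LC RC :: "'a \<Rightarrow> 'a option" and chi :: "'a \<Rightarrow> color"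
    and k l :: nat and c :: 'a
  assumes "simple_graph V E"
    and "colored_tree_labeling V E P LC RC chi"
    and "k \<ge> 1" and "2 \<le> l" and "l \<le> k"
    and "c \<in> V" and "level RC c = enat l"
    and light: "real (card (with_descendants P LC RC k (same_level_comp P LC RC k c)))
                  \<le> real (card V) powr (real l / real k)"
  shows "real (card {v \<in> same_level_comp P LC RC k c.
            \<exists>u. RC v = Some u \<and> gk_edge P LC RC k v u \<and>
                real (card (with_descendants P LC RC k (same_level_comp P LC RC k u)))
                  > real (card V) powr ((real l - 1) / real k)})
         \<le> real (card V) powr (1 / real k)"
    (is "real (card ?S) \<le> _")
proof (rule card_le_of_disjoint_heavy_subsets)
  let ?C = "same_level_comp P LC RC k c"
  let ?H = "\<lambda>v. with_descendants P LC RC k (same_level_comp P LC RC k (the (RC v)))"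
  have CV: "?C \<subseteq> V"
    using same_level_comp_subset_V[OF assms(1,2,6)] .
  have finV: "finite V"
    using assms(1) by (simp add: simple_graph_def)
  show "finite (with_descendants P LC RC k ?C)"
    using with_descendants_subset_V[OF assms(1,2) CV] finV by (rule finite_subset)
  show "finite ?S"
    using CV finV by (auto intro: finite_subset)
  show "?H v \<subseteq> with_descendants P LC RC k ?C" if "v \<in> ?S" for v
    using that CV level_right_child_less[OF assms(2)] right_child_descendants_subset by fastforce
  show "disjoint_family_on ?H ?S"
    by (rule disjoint_family_on_mono[OF _ right_children_descendants_disjoint[OF assms(1,2,6)]]) auto
  show "real (card V) powr ((real l - 1) / real k) < real (card (?H v))" if "v \<in> ?S" for v
    using that by auto
  show "real (card (with_descendants P LC RC k ?C))
      \<le> real (card V) powr ((real l - 1) / real k) * real (card V) powr (1 / real k)"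
    using light by (simp add: powr_add[symmetric] add_divide_distrib[symmetric])
  show "0 < real (card V) powr ((real l - 1) / real k)"
    using assms(6) finV card_gt_0_iff by fastforce
qed

end
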